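(* Let $n \ge m \ge 2$ with $n$ odd, and let $K_{n,m}$ be the complete bipartite graph with bipartition $(X,Y)$, $|X|=n$, $|Y|=m$. If $U$ is a strong edge geodetic set of $K_{n,m}$ with $X \subseteq U$, then $|U| \ge \frac{2n}{n+1} + m$.
   Context: All graphs are finite, simple and connected. A set $S \subseteq V(G)$ is a strong edge geodetic set of $G$ if one can assign to every unordered pair $\{u,v\}$ of distinct vertices of $S$ either one shortest $u,v$-path $P_{uv}$ in $G$ or no path, in such a way that every edge of $G$ lies on at least one of the assigned paths. *)

theory Defs
  imports Complex_Main
begin

text \<open>Simple graphs are given by a vertex set V and a symmetric irreflexive
  adjacency relation E (with E only relating vertices of V).
  Paths are lists of vertices.\<close>

definition walk :: "('a \<Rightarrow> 'a \<Rightarrow> bool) \<Rightarrow> 'a list \<Rightarrow> bool" where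
  "walk E p \<longleftrightarrow> p \<noteq> [] \<and> (\<forall>i. Suc i < length p \<longrightarrow> E (p ! i) (p ! Suc i))"

definition gdist :: "('a \<Rightarrow> 'a \<Rightarrow> bool) \<Rightarrow> 'a \<Rightarrow> 'a \<Rightarrow> nat" where
  "gdist E u v = (LEAST k. \<exists>p. walk E p \<and> hd p = u \<and> last p = v \<and> length p = Suc k)"

definition shortest_path :: "('a \<Rightarrow> 'a \<Rightarrow> bool) \<Rightarrow> 'a \<Rightarrow> 'a \<Rightarrow> 'a list \<Rightarrow> bool" where
  "shortest_path E u v p \<longleftrightarrow> walk E p \<and> hd p = u \<and> last p = v \<and> length p = Suc (gdist E u v)"

definition path_edges :: "'a list \<Rightarrow> 'a set set" where
  "path_edges p = {{p ! i, p ! Suc i} | i. Suc i < length p}"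

text \<open>Strong edge geodetic set: an assignment P of at most one shortest path
  to each unordered pair {u,v} of distinct vertices of S, covering every edge.\<close>
definition strong_edge_geodetic :: "'a set \<Rightarrow> ('a \<Rightarrow> 'a \<Rightarrow> bool) \<Rightarrow> 'a set \<Rightarrow> bool" where
  "strong_edge_geodetic V E S \<longleftrightarrow> S \<subseteq> V \<and>
     (\<exists>P :: 'a set \<Rightarrow> 'a list option.
        (\<forall>u\<in>S. \<forall>v\<in>S. u \<noteq> v \<longrightarrow>
            (case P {u, v} of None \<Rightarrow> True
             | Some p \<Rightarrow> shortest_path E u v p \<or> shortest_path E v u p)) \<and>
        (\<forall>x\<in>V. \<forall>y\<in>V. E x y \<longrightarrow>
            (\<exists>u\<in>S. \<exists>v\<in>S. u \<noteq> v \<and> (\<exists>p. P {u, v} = Some p \<and> {x, y} \<in> path_edges p))))"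

definition complete_bipartite :: "'a set \<Rightarrow> 'a set \<Rightarrow> 'a \<Rightarrow> 'a \<Rightarrow> bool" where
  "complete_bipartite X Y x y \<longleftrightarrow> (x \<in> X \<and> y \<in> Y) \<or> (x \<in> Y \<and> y \<in> X)"

end

theory Submission
  imports Defs
begin

text \<open>Let \<open>y \<in> Y\<close> be outside \<open>U\<close>. All geodesics of \<open>K\<^sub>n\<^sub>,\<^sub>m\<close> have at most
  two edges, so an assigned geodesic through an edge \<open>xy\<close> must be \<open>x' y x''\<close> with
  \<open>x', x'' \<in> X\<close>: it uses the pair \<open>{x', x''}\<close> and covers two of the \<open>n\<close> edges at \<open>y\<close>.
  Hence \<open>y\<close> consumes at least \<open>(n + 1)/2\<close> pairs of \<open>X\<close> (\<open>n\<close> odd), and distinct such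
  \<open>y\<close> consume distinct pairs because each pair carries only one path. Therefore
  \<open>|Y - U| (n + 1)/2 \<le> n(n - 1)/2\<close>, i.e. \<open>|Y - U| \<le> n - 2n/(n + 1)\<close>.\<close>

definition geodetic_cover ::
    "'a set \<Rightarrow> ('a \<Rightarrow> 'a \<Rightarrow> bool) \<Rightarrow> 'a set \<Rightarrow> ('a set \<Rightarrow> 'a list option) \<Rightarrow> bool" where
  "geodetic_cover V E S P \<longleftrightarrow>
     (\<forall>u\<in>S. \<forall>v\<in>S. u \<noteq> v \<longrightarrow>
        (case P {u, v} of None \<Rightarrow> True
         | Some p \<Rightarrow> shortest_path E u v p \<or> shortest_path E v u p)) \<and>
     (\<forall>x\<in>V. \<forall>y\<in>V. E x y \<longrightarrow>
        (\<exists>u\<in>S. \<exists>v\<in>S. u \<noteq> v \<and> (\<exists>p. P {u, v} = Some p \<and> {x, y} \<in> path_edges p)))"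

lemma strong_edge_geodetic_iff_geodetic_cover:
  "strong_edge_geodetic V E S \<longleftrightarrow> S \<subseteq> V \<and> (\<exists>P. geodetic_cover V E S P)"
  unfolding strong_edge_geodetic_def geodetic_cover_def ..

lemma walk_singleton [simp]: "walk E [a]"
  by (simp add: walk_def)

lemma walk_Cons_Cons [simp]: "walk E (a # b # p) \<longleftrightarrow> E a b \<and> walk E (b # p)"
proof -
  have "(\<forall>i. Suc i < length (a # b # p) \<longrightarrow> E ((a # b # p) ! i) ((a # b # p) ! Suc i))
    \<longleftrightarrow> E a b \<and> (\<forall>i. Suc i < length (b # p) \<longrightarrow> E ((b # p) ! i) ((b # p) ! Suc i))"
    (is "(\<forall>i. ?P i) \<longleftrightarrow> _")
  proof
    assume "\<forall>i. ?P i"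
    then show "E a b \<and> (\<forall>i. Suc i < length (b # p) \<longrightarrow> E ((b # p) ! i) ((b # p) ! Suc i))"
      by (metis Suc_less_eq length_Cons nth_Cons_0 nth_Cons_Suc zero_less_Suc)
  next
    assume "E a b \<and> (\<forall>i. Suc i < length (b # p) \<longrightarrow> E ((b # p) ! i) ((b # p) ! Suc i))"
    then show "\<forall>i. ?P i" by (auto simp: nth_Cons split: nat.split)
  qed
  thus ?thesis by (simp add: walk_def)
qed

lemma path_edges_singleton [simp]: "path_edges [a] = {}"
  by (simp add: path_edges_def)

lemma path_edges_Cons_Cons [simp]:
  "path_edges (a # b # p) = insert {a, b} (path_edges (b # p))"
proof (intro set_eqI iffI)
  fix e assume "e \<in> path_edges (a # b # p)"
  then obtain i where "Suc i < length (a # b # p)" "e = {(a # b # p) ! i, (a # b # p) ! Suc i}"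
    by (auto simp: path_edges_def)
  then show "e \<in> insert {a, b} (path_edges (b # p))"
    by (cases i) (auto simp: path_edges_def)
next
  fix e assume "e \<in> insert {a, b} (path_edges (b # p))"
  then consider "e = {a, b}" | j where "Suc j < length (b # p)" "e = {(b # p) ! j, (b # p) ! Suc j}"
    by (auto simp: path_edges_def)
  then show "e \<in> path_edges (a # b # p)"
  proof cases
    case 1
    then show ?thesis unfolding path_edges_def by (intro CollectI exI[of _ 0]) simp
  next
    case (2 j)
    then show ?thesis unfolding path_edges_def by (intro CollectI exI[of _ "Suc j"]) simp
  qed
qed

lemma gdist_le_walk:
  assumes "walk E p" "hd p = u" "last p = v"
  shows "gdist E u v \<le> length p - 1"
proof -
  have "p \<noteq> []" using assms(1) by (simp add: walk_def)
  hence "\<exists>q. walk E q \<and> hd q = u \<and> last q = v \<and> length q = Suc (length p - 1)"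
    using assms by auto
  thus ?thesis unfolding gdist_def by (rule Least_le)
qed

lemma gdist_complete_bipartite_le_2:
  assumes "X \<noteq> {}" "Y \<noteq> {}" "u \<in> X \<union> Y" "v \<in> X \<union> Y"
  shows "gdist (complete_bipartite X Y) u v \<le> 2"
proof -
  obtain x0 y0 where x0: "x0 \<in> X" and y0: "y0 \<in> Y" using assms(1,2) by blast
  let ?E = "complete_bipartite X Y"
  consider w where "walk ?E [u, w, v]" | "walk ?E [u, v]"
    using assms(3,4) x0 y0 by (cases "u \<in> X"; cases "v \<in> X") (auto simp: complete_bipartite_def)
  then show ?thesis
  proof cases
    case (1 w)
    have "gdist ?E u v \<le> length [u, w, v] - 1" by (rule gdist_le_walk[OF 1]) simp_all
    then show ?thesis by simp
  next
    case 2
    have "gdist ?E u v \<le> length [u, v] - 1" by (rule gdist_le_walk[OF 2]) simp_all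
    then show ?thesis by simp
  qed
qed

lemma length_shortest_path_complete_bipartite:
  assumes "shortest_path (complete_bipartite X Y) u v p"
    and "X \<noteq> {}" "Y \<noteq> {}" "u \<in> X \<union> Y" "v \<in> X \<union> Y"
  shows "length p \<le> 3"
  using assms gdist_complete_bipartite_le_2[of X Y u v] by (simp add: shortest_path_def)

lemma shortest_path_complete_bipartite_through:
  assumes sp: "shortest_path (complete_bipartite X Y) u v p"
    and XY: "X \<inter> Y = {}" "X \<noteq> {}" "Y \<noteq> {}" and uv: "u \<in> X \<union> Y" "v \<in> X \<union> Y"
    and y: "y \<in> Y" "y \<noteq> u" "y \<noteq> v" and x: "x \<in> X"
    and edge: "{x, y} \<in> path_edges p"
  shows "p ! 1 = y \<and> u \<in> X \<and> v \<in> X \<and> (x = u \<or> x = v)"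
proof -
  let ?E = "complete_bipartite X Y"
  have walk: "walk ?E p" and ends: "hd p = u" "last p = v"
    using sp by (auto simp: shortest_path_def)
  have "length p \<le> 3"
    using length_shortest_path_complete_bipartite[OF sp XY(2,3) uv] .
  moreover have "p \<noteq> []" using walk by (simp add: walk_def)
  ultimately consider a where "p = [a]" | a b where "p = [a, b]" | a b c where "p = [a, b, c]"
    by (cases p) (auto simp: length_Suc_conv le_Suc_eq numeral_3_eq_3)
  then show ?thesis
  proof cases
    case (3 a b c)
    with ends edge y have "b = y" by (auto simp: doubleton_eq_iff)
    with 3 walk XY(1) y(1) have "a \<in> X" "c \<in> X" by (auto simp: complete_bipartite_def)
    moreover have "x \<noteq> y" using x y(1) XY(1) by blast
    ultimately show ?thesis using 3 ends edge \<open>b = y\<close> by (auto simp: doubleton_eq_iff)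
  qed (use ends edge y in \<open>auto simp: doubleton_eq_iff\<close>)
qed

lemma card_le_twice_card_of_pair_cover:
  assumes "finite X" "F \<subseteq> {q. q \<subseteq> X \<and> card q = 2}" "X \<subseteq> \<Union>F"
  shows "card X \<le> 2 * card F"
proof -
  have "card X \<le> card (\<Union>F)"
    using assms by (intro card_mono) (auto intro: finite_subset)
  also have "\<dots> \<le> (\<Sum>q\<in>F. card q)" by (rule card_Union_le_sum_card)
  also have "\<dots> = 2 * card F" using assms(2) by (simp add: subset_eq)
  finally show ?thesis .
qed

lemma sum_card_disjoint_pair_families_le:
  assumes "finite X" "finite I" "\<And>i. i \<in> I \<Longrightarrow> F i \<subseteq> {q. q \<subseteq> X \<and> card q = 2}"
    and "\<And>i j. i \<in> I \<Longrightarrow> j \<in> I \<Longrightarrow> i \<noteq> j \<Longrightarrow> F i \<inter> F j = {}"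
  shows "(\<Sum>i\<in>I. card (F i)) \<le> card X choose 2"
proof -
  have fin: "finite {q. q \<subseteq> X \<and> card q = 2}" using assms(1) by simp
  have "(\<Sum>i\<in>I. card (F i)) = card (\<Union>i\<in>I. F i)"
    using assms(2,4) finite_subset[OF assms(3) fin] by (intro card_UN_disjoint[symmetric]) auto
  also have "\<dots> \<le> card {q. q \<subseteq> X \<and> card q = 2}"
    using assms(3) fin by (intro card_mono) auto
  also have "\<dots> = card X choose 2" using n_subsets[OF assms(1)] .
  finally show ?thesis .
qed

lemma geodetic_cover_complete_bipartite_pair_through:
  assumes P: "geodetic_cover (X \<union> Y) (complete_bipartite X Y) U P" and "U \<subseteq> X \<union> Y"
    and XY: "X \<inter> Y = {}" "X \<noteq> {}" "Y \<noteq> {}"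
    and y: "y \<in> Y - U" and x: "x \<in> X"
  shows "\<exists>q. x \<in> q \<and> q \<subseteq> X \<and> card q = 2 \<and> (\<exists>p. P q = Some p \<and> p ! 1 = y)"
proof -
  let ?E = "complete_bipartite X Y"
  have "?E x y" using x y by (simp add: complete_bipartite_def)
  then obtain u v p where uv: "u \<in> U" "v \<in> U" "u \<noteq> v"
      and p: "P {u, v} = Some p" "{x, y} \<in> path_edges p"
    using P x y unfolding geodetic_cover_def by blast
  have "shortest_path ?E u v p \<or> shortest_path ?E v u p"
    using P uv p(1) unfolding geodetic_cover_def by fastforce
  moreover have "u \<in> X \<union> Y" "v \<in> X \<union> Y" "y \<noteq> u" "y \<noteq> v"
    using uv y \<open>U \<subseteq> X \<union> Y\<close> by auto
  ultimately have "p ! 1 = y \<and> u \<in> X \<and> v \<in> X \<and> (x = u \<or> x = v)"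
    using shortest_path_complete_bipartite_through[OF _ XY, of _ _ p y x] x y p(2) by blast
  with uv p show ?thesis by (intro exI[of _ "{u, v}"]) auto
qed

lemma geodetic_cover_complete_bipartite_bound:
  assumes P: "geodetic_cover (X \<union> Y) (complete_bipartite X Y) U P" and "U \<subseteq> X \<union> Y"
    and XY: "finite X" "finite Y" "X \<inter> Y = {}" "X \<noteq> {}" "Y \<noteq> {}"
    and "odd (card X)"
  shows "card (Y - U) * (card X + 1) \<le> card X * (card X - 1)"
proof -
  define F where "F y = {q. q \<subseteq> X \<and> card q = 2 \<and> (\<exists>p. P q = Some p \<and> p ! 1 = y)}" for y
  have pairs: "F y \<subseteq> {q. q \<subseteq> X \<and> card q = 2}" for y by (auto simp: F_def)
  have "card X + 1 \<le> 2 * card (F y)" if "y \<in> Y - U" for y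
  proof -
    have "X \<subseteq> \<Union>(F y)"
      using geodetic_cover_complete_bipartite_pair_through[OF P \<open>U \<subseteq> X \<union> Y\<close> XY(3-5) that]
      unfolding F_def by blast
    from card_le_twice_card_of_pair_cover[OF XY(1) pairs this] \<open>odd (card X)\<close>
    show ?thesis by presburger
  qed
  moreover have "(\<Sum>y\<in>Y - U. card (F y)) \<le> card X choose 2"
  proof (rule sum_card_disjoint_pair_families_le[OF XY(1) _ pairs])
    show "F y \<inter> F y' = {}" if "y \<noteq> y'" for y y'
      using that by (auto simp: F_def)
  qed (use XY(2) in simp)
  ultimately have "card (Y - U) * (card X + 1) \<le> 2 * (card X choose 2)"
    using sum_mono[of "Y - U" "\<lambda>_. card X + 1" "\<lambda>y. 2 * card (F y)"]
    by (simp add: sum_distrib_left[symmetric])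
  also have "\<dots> = card X * (card X - 1)"
    using \<open>odd (card X)\<close> by (simp add: choose_two)
  finally show ?thesis .
qed

theorem mainTheorem5:
  fixes X Y U :: "'a set" and n m :: nat
  assumes "finite X" and "finite Y" and "X \<inter> Y = {}"
    and "card X = n" and "card Y = m"
    and "m \<ge> 2" and "n \<ge> m" and "odd n"
    and "strong_edge_geodetic (X \<union> Y) (complete_bipartite X Y) U"
    and "X \<subseteq> U"
  shows "real (card U) \<ge> 2 * real n / (real n + 1) + real m"
proof -
  obtain P where UV: "U \<subseteq> X \<union> Y" and P: "geodetic_cover (X \<union> Y) (complete_bipartite X Y) U P"
    using assms(9) by (auto simp: strong_edge_geodetic_iff_geodetic_cover)
  have "X \<noteq> {}" "Y \<noteq> {}" using assms(4-7) by auto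
  with assms(1-4,8) have "card (Y - U) * (n + 1) \<le> n * (n - 1)"
    using geodetic_cover_complete_bipartite_bound[OF P UV] by blast
  moreover have "n \<ge> 1" using assms(6,7) by simp
  ultimately have bound: "real (card (Y - U)) * (real n + 1) \<le> real n * (real n - 1)"
    by (metis of_nat_1 of_nat_add of_nat_diff of_nat_le_iff of_nat_mult)
  have "U = X \<union> (Y \<inter> U)" using UV assms(10) by blast
  hence "card U = n + card (Y \<inter> U)"
    using assms(1-4) card_Un_disjoint[of X "Y \<inter> U"] by auto
  moreover have "m = card (Y \<inter> U) + card (Y - U)"
    using card_Int_Diff[OF assms(2)] assms(5) by simp
  ultimately have card_U: "real (card U) = real n + real m - real (card (Y - U))" by simp
  have "2 * real n / (real n + 1) = real n - real n * (real n - 1) / (real n + 1)"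
    by (simp add: field_simps)
  also have "\<dots> \<le> real n - real (card (Y - U))"
    using bound by (simp add: field_simps)
  finally show ?thesis unfolding card_U by simp
qed

end
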